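(* Under all assumptions of the non-convex convergence theorem below, and with the specific choice $\beta_{1,t}=\beta_1/\sqrt{t}$ (where $\beta_1\in[0,1)$), the AGD iterates satisfy, for every integer $T\ge3$, $$\min_{t\in[T]}\mathbf{E}\big[\|\nabla f(\bm{w}_t)\|^2\big]<C_3\frac{1}{\sqrt{T}-\sqrt{2}}+C_4\frac{\log T}{\sqrt{T}-\sqrt{2}}+\frac{C_5\alpha}{1-\beta_1}\frac{\log T+1}{\sqrt{T}-\sqrt{2}},$$ with $$C_3=\frac{G_\infty}{\alpha(1-\beta_1)^2(1-\beta_2)^2}\Big(f(\bm{w}_1)-f(\bm{w}^* )+\frac{nG_\infty^2\alpha}{(1-\beta_1)^8\delta^2}(\delta+8L\alpha)+\frac{\alpha\beta_1 nG_\infty^2}{(1-\beta_1)^3\delta}\Big),$$ $$C_4=\frac{15LnG_\infty^3\alpha}{2(1-\beta_2)^2(1-\beta_1)^{10}\delta^2},\qquad C_5=\frac{nG_\infty^3}{\alpha(1-\beta_1)^5(1-\beta_2)^2\delta}.$$ The assumptions are: $f$ differentiable, lower bounded with optimal solution $\bm{w}^*$, $f(\bm{w}^* )>-\infty$, and $L$-smooth; $\|\bm{g}_t\|_\infty\le G_\infty$, $\|\nabla f(\bm{w}_t)\|_\infty\le G_\infty$ for $t\in[T]$ with $G_\infty\ge\delta$; $\bm{g}_t=\nabla f(\bm{w}_t)+\bm{\zeta}_t$ with $\mathbf{E}[\bm{\zeta}_t]=\bm{0}$ and mutually independent noises; $\alpha_t=\alpha/\sqrt{t}$ with $\alpha>0$,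 $\beta_2\in[0,1)$, and $b_{t,i}\le b_{t+1,i}$ for all $i\in[n]$ and all $t$.
   Context: AGD iteration (with time-varying first-moment parameter). Fix $n\ge1$, $\delta>0$, $\beta_2\in[0,1)$, a non-increasing sequence $(\beta_{1,t})_{t\ge1}$ with $0\le\beta_{1,t}\le\beta_1<1$, step sizes $\alpha_t>0$, and an initial point $\bm{w}_1\in\mathbb{R}^n$. Set $\bm{m}_0=\bm{0}$, $\bm{b}_0=\bm{0}$. For $t=1,2,\dots$, with $\bm{g}_t\in\mathbb{R}^n$ the (stochastic) gradient obtained at $\bm{w}_t$: $\bm{m}_t=\beta_{1,t}\bm{m}_{t-1}+(1-\beta_{1,t})\bm{g}_t$; $\bm{s}_1=\bm{m}_1/(1-\beta_{1,1})$ and $\bm{s}_t=\bm{m}_t/(1-\beta_{1,t}^t)-\bm{m}_{t-1}/(1-\beta_{1,t}^{t-1})$ for $t>1$; $\bm{b}_t=\beta_2\bm{b}_{t-1}+(1-\beta_2)\bm{s}_t^2$; $\bm{v}_t=\max(\sqrt{\bm{b}_t},\,\delta\sqrt{1-\beta_2^t})$; $\hat{\alpha}_t=\alpha_t\frac{\sqrt{1-\beta_2^t}}{1-\beta_{1,t}^t}$; $\bm{w}_{t+1}=\bm{w}_t-\hat{\alpha}_t\,\bm{m}_t/\bm{v}_t$. All vector operations (squares, square roots, max with a scalar or vector, division) are element-wise; $b_{t,i}$, $v_{t,i}$ denote the $i$-th coordinates. $[T]=\{1,\dots,T\}$. $\|\cdot\|$ is the Euclidean norm, $\|\cdot\|_\infty$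 the max norm. Expectations are over the randomness of the stochastic gradients. *)

theory Defs
  imports "HOL-Probability.Probability"
begin

definition linf :: "real ^ 'n \<Rightarrow> real" where
  "linf x = Max (range (\<lambda>i. \<bar>x $ i\<bar>))"

text \<open>State of the AGD iteration after k steps:
  agd_state ... k = (w_{k+1}, m_k, b_k).\<close>
fun agd_state ::
  "(real^'n \<Rightarrow> real^'n) \<Rightarrow> (nat \<Rightarrow> real) \<Rightarrow> real \<Rightarrow> real \<Rightarrow> (nat \<Rightarrow> real)
   \<Rightarrow> real^'n \<Rightarrow> (nat \<Rightarrow> real^'n) \<Rightarrow> nat \<Rightarrow> (real^'n) \<times> (real^'n) \<times> (real^'n)" where
  "agd_state grad b1s b2 \<delta> alphas w1 z 0 = (w1, 0, 0)"
| "agd_state grad b1s b2 \<delta> alphas w1 z (Suc k) =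
     (let (w, mp, bp) = agd_state grad b1s b2 \<delta> alphas w1 z k;
          t = Suc k;
          g = grad w + z t;
          m = b1s t *\<^sub>R mp + (1 - b1s t) *\<^sub>R g;
          s = (if t = 1 then (1 / (1 - b1s 1)) *\<^sub>R m
               else (1 / (1 - b1s t ^ t)) *\<^sub>R m - (1 / (1 - b1s t ^ (t - 1))) *\<^sub>R mp);
          b = (\<chi> i. b2 * (bp $ i) + (1 - b2) * (s $ i)\<^sup>2);
          v = (\<chi> i. max (sqrt (b $ i)) (\<delta> * sqrt (1 - b2 ^ t)));
          ah = alphas t * sqrt (1 - b2 ^ t) / (1 - b1s t ^ t);
          w' = w - ah *\<^sub>R (\<chi> i. (m $ i) / (v $ i))
      in (w', m, b))"

definition agd_w where
  "agd_w grad b1s b2 \<delta> alphas w1 z t = fst (agd_state grad b1s b2 \<delta> alphas w1 z (t - 1))"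

definition agd_g where
  "agd_g grad b1s b2 \<delta> alphas w1 z t = grad (agd_w grad b1s b2 \<delta> alphas w1 z t) + z t"

definition agd_b where
  "agd_b grad b1s b2 \<delta> alphas w1 z t = snd (snd (agd_state grad b1s b2 \<delta> alphas w1 z t))"

end

theory Submission
  imports Defs
begin

text \<open>
  Along every sample path, the descent lemma bounds the decrease of f in one step by
  \<open>\<hat>\<alpha>\<^sub>t \<langle>\<nabla>f(w\<^sub>t), m\<^sub>t / v\<^sub>t\<rangle>\<close>. Splitting \<open>m\<^sub>t = \<beta>\<^sub>1\<^sub>,\<^sub>t m\<^sub>t\<^sub>-\<^sub>1 + (1 - \<beta>\<^sub>1\<^sub>,\<^sub>t)(\<nabla>f(w\<^sub>t) + \<zeta>\<^sub>t)\<close>, the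
  gradient part is at least a constant times \<open>\<parallel>\<nabla>f(w\<^sub>t)\<parallel>\<^sup>2 / \<surd>t\<close> because
  \<open>v\<^sub>t \<le> 2G/(1 - \<beta>\<^sub>1)\<close>, the momentum part and the quadratic term are \<open>O(1/t)\<close>, and the noise
  part is written with \<open>v\<^sub>t\<^sub>-\<^sub>1\<close> in place of \<open>v\<^sub>t\<close>, the error being controlled by the
  telescoping differences \<open>1/v\<^sub>t\<^sub>-\<^sub>1 - 1/v\<^sub>t \<ge> 0\<close> (this is where monotonicity of \<open>b\<^sub>t\<close> enters).
  Summing over \<open>t \<le> T\<close> and using \<open>\<Sum> 1/t \<le> ln T + 1\<close> gives a pathwise inequality whose noise
  term has expectation zero, since \<open>v\<^sub>t\<^sub>-\<^sub>1\<close> and \<open>w\<^sub>t\<close> depend only on \<open>\<zeta>\<^sub>1, \<dots>, \<zeta>\<^sub>t\<^sub>-\<^sub>1\<close>, which are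
  independent of \<open>\<zeta>\<^sub>t\<close>. Finally the minimum is at most the weighted average with weights
  \<open>1/\<surd>t\<close>, and \<open>\<Sum>\<^sub>t\<^sub>\<le>\<^sub>T 1/\<surd>t \<ge> 2\<surd>(T+1) - 2 > 2(\<surd>T - \<surd>2)\<close>.
\<close>

lemma lipschitz_gradient_quadratic_bound:
  fixes f :: "'a::real_inner \<Rightarrow> real"
  assumes diff: "\<And>x. (f has_derivative (\<lambda>h. grad x \<bullet> h)) (at x)"
    and smooth: "\<And>x y. norm (grad x - grad y) \<le> L * norm (x - y)"
  shows "f y \<le> f x + grad x \<bullet> (y - x) + L / 2 * (norm (y - x))\<^sup>2"
proof -
  define d where "d = y - x"
  define \<phi> where "\<phi> s = f (x + s *\<^sub>R d) - s * (grad x \<bullet> d) - L / 2 * s\<^sup>2 * (norm d)\<^sup>2" for s :: real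
  have \<phi>_deriv: "DERIV \<phi> s :> (grad (x + s *\<^sub>R d) \<bullet> d - grad x \<bullet> d - L * s * (norm d)\<^sup>2)" for s
  proof -
    have "((\<lambda>s. x + s *\<^sub>R d) has_derivative (\<lambda>h. h *\<^sub>R d)) (at s)"
      by (auto intro!: derivative_eq_intros)
    from has_derivative_compose[OF this diff]
    have "((\<lambda>s. f (x + s *\<^sub>R d)) has_derivative (\<lambda>h. grad (x + s *\<^sub>R d) \<bullet> (h *\<^sub>R d))) (at s)"
      by simp
    then have f_deriv: "((\<lambda>s. f (x + s *\<^sub>R d)) has_real_derivative (grad (x + s *\<^sub>R d) \<bullet> d)) (at s)"
      unfolding has_field_derivative_def by (simp add: mult.commute[of _ "grad (x + s *\<^sub>R d) \<bullet> d"])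
    show ?thesis unfolding \<phi>_def
      by (rule derivative_eq_intros f_deriv | simp)+
  qed
  have "\<phi> 1 \<le> \<phi> 0"
  proof (rule DERIV_nonpos_imp_nonincreasing[of 0 1])
    fix s :: real assume s: "0 \<le> s" "s \<le> 1"
    have "grad (x + s *\<^sub>R d) \<bullet> d - grad x \<bullet> d = (grad (x + s *\<^sub>R d) - grad x) \<bullet> d"
      by (simp add: inner_diff_left)
    also have "\<dots> \<le> norm (grad (x + s *\<^sub>R d) - grad x) * norm d"
      by (rule norm_cauchy_schwarz)
    also have "\<dots> \<le> L * norm (s *\<^sub>R d) * norm d"
      using smooth[of "x + s *\<^sub>R d" x] by (simp add: mult_right_mono)
    also have "\<dots> = L * s * (norm d)\<^sup>2"
      using s by (simp add: power2_eq_square)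
    finally show "\<exists>y. DERIV \<phi> s :> y \<and> y \<le> 0"
      using \<phi>_deriv[of s] by auto
  qed simp
  then show ?thesis unfolding \<phi>_def d_def by (simp add: algebra_simps)
qed

lemma lipschitz_constant_nonneg:
  fixes f :: "'a::real_normed_vector \<Rightarrow> 'b::real_normed_vector" and x y :: 'a
  assumes "\<And>x y. norm (f x - f y) \<le> L * norm (x - y)" and "x \<noteq> y"
  shows "L \<ge> 0"
proof -
  have "0 \<le> L * norm (x - y)"
    using assms(1)[of x y] norm_ge_zero order_trans by blast
  with assms(2) show ?thesis by (simp add: zero_le_mult_iff)
qed

lemma abs_vec_nth_le_linf: "\<bar>x $ i\<bar> \<le> linf x"
  unfolding linf_def by (rule Max_ge) auto

lemma power2_norm_vec_eq_sum: "(norm (x :: real ^ 'n))\<^sup>2 = (\<Sum>i\<in>UNIV. (x $ i)\<^sup>2)"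
  unfolding power2_norm_eq_inner inner_vec_def by (simp add: power2_eq_square)

lemma sum_inverse_le_ln_plus_one:
  assumes "T \<ge> 1"
  shows "(\<Sum>t=1..T. 1 / real t) \<le> ln (real T) + 1"
proof -
  have "harm T - ln (real T) \<le> harm 1 - ln (real 1)"
    using euler_mascheroni_sequence_decreasing[of 1 T] assms by simp
  then show ?thesis by (simp add: harm_def inverse_eq_divide)
qed

lemma sum_inverse_sqrt_ge: "(\<Sum>t=1..n. 1 / sqrt (real t)) \<ge> 2 * sqrt (real n + 1) - 2"
proof (induction n)
  case 0
  then show ?case by simp
next
  case (Suc n)
  define x where "x = sqrt (real n + 1)"
  define y where "y = sqrt (real n + 2)"
  have x_pos: "x > 0" unfolding x_def by simp
  have "2 * x * y \<le> x\<^sup>2 + y\<^sup>2"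
    using sum_squares_bound[of x y] by simp
  then have "x * (2 * y - 2 * x) \<le> 1"
    unfolding x_def y_def by (simp add: algebra_simps power2_eq_square)
  then have "2 * y - 2 * x \<le> 1 / x"
    using x_pos by (simp add: field_simps)
  moreover have "(\<Sum>t=1..Suc n. 1 / sqrt (real t)) = (\<Sum>t=1..n. 1 / sqrt (real t)) + 1 / x"
    by (simp add: x_def add.commute)
  moreover have "sqrt (real (Suc n) + 1) = y"
    by (simp add: y_def add.commute)
  ultimately show ?case
    using Suc.IH unfolding x_def by linarith
qed

lemma Min_image_mult_sum_le:
  fixes E c :: "'a \<Rightarrow> real"
  assumes "finite A" and "\<And>t. t \<in> A \<Longrightarrow> c t \<ge> 0"
  shows "Min (E ` A) * sum c A \<le> (\<Sum>t\<in>A. c t * E t)"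
proof -
  have "Min (E ` A) * sum c A = (\<Sum>t\<in>A. c t * Min (E ` A))"
    by (simp add: sum_distrib_right mult.commute)
  also have "\<dots> \<le> (\<Sum>t\<in>A. c t * E t)"
    using assms by (intro sum_mono mult_left_mono Min_le) auto
  finally show ?thesis .
qed

lemma Min_lt_of_sqrt_weighted_sum_le:
  fixes E :: "nat \<Rightarrow> real"
  assumes weighted: "c * (\<Sum>t=1..T. E t / sqrt (real t)) \<le> R"
    and c: "c > 0" and R: "R > 0" and T: "T \<ge> 3"
  shows "Min (E ` {1..T}) < R / (2 * c) / (sqrt (real T) - sqrt 2)"
proof -
  define D where "D = sqrt (real T) - sqrt 2"
  define S where "S = (\<Sum>t=1..T. 1 / sqrt (real t))"
  have D: "D > 0" using T by (simp add: D_def)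
  have "sqrt (real T) < sqrt (real T + 1)" "1 < sqrt 2" "2 * D = 2 * sqrt (real T) - 2 * sqrt 2"
    by (simp_all add: D_def)
  then have S: "S > 2 * D"
    using sum_inverse_sqrt_ge[of T] unfolding S_def by linarith
  have "Min (E ` {1..T}) * S \<le> (\<Sum>t=1..T. E t / sqrt (real t))"
    using Min_image_mult_sum_le[of "{1..T}" "\<lambda>t. 1 / sqrt (real t)" E] unfolding S_def by simp
  then have "c * (Min (E ` {1..T}) * S) \<le> R"
    using weighted c by (meson mult_left_mono less_imp_le order_trans)
  then have "Min (E ` {1..T}) \<le> R / (c * S)"
    using c S D by (simp add: field_simps)
  also have "\<dots> < R / (c * (2 * D))"
    using R c S D by (intro divide_strict_left_mono) auto
  finally show ?thesis
    unfolding D_def by (simp add: field_simps)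
qed

lemma divide_powers_mono:
  fixes u s c :: real
  assumes "0 < u" "u \<le> 1" "0 < s" "s \<le> 1" "c \<ge> 0" "a \<le> a'" "b \<le> b'"
  shows "c / (u ^ a * s ^ b) \<le> c / (u ^ a' * s ^ b')"
  using assms by (intro divide_left_mono mult_mono power_decreasing) auto

text \<open>Here \<open>u\<close> stands for \<open>1 - \<beta>\<^sub>1\<close>, \<open>s\<close> for \<open>\<surd>(1 - \<beta>\<^sub>2)\<close>, \<open>N\<close> for the dimension and
  \<open>l\<close> for \<open>ln T\<close>; the left-hand side is the pathwise bound divided by twice its rate.\<close>

lemma agd_constants_bound:
  fixes \<Delta> N G \<delta> \<alpha> b1 L l u s :: real
  assumes \<Delta>: "\<Delta> \<ge> 0" and N: "N \<ge> 0" and G: "G > 0" and \<delta>: "\<delta> > 0" and \<alpha>: "\<alpha> > 0"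
    and b1: "0 \<le> b1" "b1 \<le> 1" and L: "L \<ge> 0" and l: "l \<ge> 0"
    and u: "0 < u" "u \<le> 1" and s: "0 < s" "s \<le> 1"
  shows "(\<Delta> + 2 * \<alpha> * G\<^sup>2 / u * (N / (\<delta> * s))
          + N * (\<alpha> * b1 * G\<^sup>2 / (u * (\<delta> * s)) + L / 2 * (\<alpha>\<^sup>2 * G\<^sup>2 / (u\<^sup>2 * \<delta>\<^sup>2 * s\<^sup>2))) * (l + 1))
        / (2 * (\<alpha> * s * u\<^sup>2 / (2 * G)))
    \<le> G / (\<alpha> * u\<^sup>2 * (s\<^sup>2)\<^sup>2) * (\<Delta> + N * G\<^sup>2 * \<alpha> / (u ^ 8 * \<delta>\<^sup>2) * (\<delta> + 8 * L * \<alpha>) + \<alpha> * b1 * N * G\<^sup>2 / (u ^ 3 * \<delta>))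
     + 15 * L * N * G ^ 3 * \<alpha> / (2 * (s\<^sup>2)\<^sup>2 * u ^ 10 * \<delta>\<^sup>2) * l
     + N * G ^ 3 / (\<alpha> * u ^ 5 * (s\<^sup>2)\<^sup>2 * \<delta>) * \<alpha> / u * (l + 1)"
proof -
  define P where "P = N * G ^ 3 / \<delta>"
  define Q where "Q = L * N * \<alpha> * G ^ 3 / \<delta>\<^sup>2"
  define X where "X = P / (u ^ 3 * s ^ 2)"
  define Y where "Y = Q / (2 * u ^ 4 * s ^ 3)"
  define Z where "Z = Q / (u ^ 10 * s ^ 4)"
  define X5 where "X5 = P / (u ^ 5 * s ^ 4)"
  define X6 where "X6 = P / (u ^ 6 * s ^ 4)"
  define X10 where "X10 = P / (u ^ 10 * s ^ 4)"
  define D1 where "D1 = G * \<Delta> / \<alpha> / (u ^ 2 * s ^ 1)"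
  define D2 where "D2 = G * \<Delta> / \<alpha> / (u ^ 2 * s ^ 4)"
  have P: "P \<ge> 0" and Q: "Q \<ge> 0"
    using N G \<delta> L \<alpha> by (simp_all add: P_def Q_def)
  have X_nonneg: "X \<ge> 0" and Z_nonneg: "Z \<ge> 0"
    unfolding X_def Z_def using P Q u s by simp_all
  have X_le: "X \<le> X5" "X \<le> X6" "X \<le> X10"
    unfolding X_def X5_def X6_def X10_def using P u s by (simp_all add: divide_powers_mono)
  have "Y \<le> Q / (u ^ 4 * s ^ 3)"
    unfolding Y_def by (rule frac_le) (use Q u s in auto)
  also have "\<dots> \<le> Z"
    unfolding Z_def using Q u s by (intro divide_powers_mono) auto
  finally have Y_le: "Y \<le> Z" .
  have "D1 \<le> D2"
    unfolding D1_def D2_def using \<Delta> G \<alpha> u s by (intro divide_powers_mono) auto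
  moreover have "b1 * X \<le> b1 * X5"
    using X_le(1) b1 by (intro mult_left_mono) auto
  moreover have "b1 * X * l \<le> X6 * l"
    using X_le(2) X_nonneg b1 l by (intro mult_right_mono) (auto intro: order_trans[OF mult_left_le_one_le])
  moreover have "Y * l \<le> 15 / 2 * Z * l"
    using Y_le Z_nonneg l by (intro mult_right_mono) auto
  moreover have "Y \<le> 8 * Z"
    using Y_le Z_nonneg by simp
  moreover have "(\<Delta> + 2 * \<alpha> * G\<^sup>2 / u * (N / (\<delta> * s))
          + N * (\<alpha> * b1 * G\<^sup>2 / (u * (\<delta> * s)) + L / 2 * (\<alpha>\<^sup>2 * G\<^sup>2 / (u\<^sup>2 * \<delta>\<^sup>2 * s\<^sup>2))) * (l + 1))
        / (2 * (\<alpha> * s * u\<^sup>2 / (2 * G))) = D1 + 2 * X + (b1 * X + Y) * (l + 1)"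
    using G \<delta> \<alpha> u s unfolding D1_def X_def Y_def P_def Q_def
    by (simp add: field_simps power2_eq_square power3_eq_cube eval_nat_numeral)
  moreover have "G / (\<alpha> * u\<^sup>2 * (s\<^sup>2)\<^sup>2) * (\<Delta> + N * G\<^sup>2 * \<alpha> / (u ^ 8 * \<delta>\<^sup>2) * (\<delta> + 8 * L * \<alpha>) + \<alpha> * b1 * N * G\<^sup>2 / (u ^ 3 * \<delta>))
     + 15 * L * N * G ^ 3 * \<alpha> / (2 * (s\<^sup>2)\<^sup>2 * u ^ 10 * \<delta>\<^sup>2) * l
     + N * G ^ 3 / (\<alpha> * u ^ 5 * (s\<^sup>2)\<^sup>2 * \<delta>) * \<alpha> / u * (l + 1)
     = D2 + X10 + 8 * Z + b1 * X5 + 15 / 2 * Z * l + X6 * (l + 1)"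
    using G \<delta> \<alpha> u s unfolding D2_def X5_def X6_def X10_def P_def Q_def Z_def
    by (simp add: field_simps power2_eq_square power3_eq_cube eval_nat_numeral)
  ultimately show ?thesis
    using X_le by (simp add: algebra_simps)
qed

lemma borel_measurable_vec_nth [measurable]:
  assumes "f \<in> borel_measurable N"
  shows "(\<lambda>x. (f x :: real ^ 'n) $ i) \<in> borel_measurable N"
proof -
  have "(\<lambda>v::real^'n. v $ i) \<in> borel_measurable borel"
    by (intro borel_measurable_continuous_onI linear_continuous_on bounded_linear_vec_nth)
  from measurable_compose[OF assms this] show ?thesis .
qed

lemma borel_measurable_vec_lambda:
  assumes "\<And>i. (\<lambda>x. F x i) \<in> borel_measurable N"
  shows "(\<lambda>x. (\<chi> i. F x i) :: real ^ 'n) \<in> borel_measurable N"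
  unfolding borel_measurable_euclidean_space[where 'c="real ^ 'n"]
  using assms by (auto simp: Basis_vec_def inner_axis)

lemma agd_state_measurable:
  fixes zs :: "'b \<Rightarrow> nat \<Rightarrow> real ^ 'n" and grad :: "real ^ 'n \<Rightarrow> real ^ 'n"
  assumes grad_meas: "grad \<in> borel_measurable borel"
    and zs_meas: "\<And>s. s \<in> {1..K} \<Longrightarrow> (\<lambda>x. zs x s) \<in> borel_measurable N"
    and "k \<le> K"
  shows "(\<lambda>x. fst (agd_state grad b1s b2 \<delta> als w1 (zs x) k)) \<in> borel_measurable N
     \<and> (\<lambda>x. fst (snd (agd_state grad b1s b2 \<delta> als w1 (zs x) k))) \<in> borel_measurable N
     \<and> (\<lambda>x. snd (snd (agd_state grad b1s b2 \<delta> als w1 (zs x) k))) \<in> borel_measurable N"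
  using \<open>k \<le> K\<close>
proof (induction k)
  case 0
  then show ?case by simp
next
  case (Suc k)
  define P where "P x = agd_state grad b1s b2 \<delta> als w1 (zs x) k" for x
  have [measurable]: "(\<lambda>x. fst (P x)) \<in> borel_measurable N"
    "(\<lambda>x. fst (snd (P x))) \<in> borel_measurable N" "(\<lambda>x. snd (snd (P x))) \<in> borel_measurable N"
    using Suc by (auto simp: P_def)
  have [measurable]: "(\<lambda>x. zs x (Suc k)) \<in> borel_measurable N"
    using zs_meas Suc.prems by auto
  have [measurable]: "(\<lambda>x. grad (fst (P x))) \<in> borel_measurable N"
    using measurable_compose[OF _ grad_meas] by measurable
  define m where "m x = b1s (Suc k) *\<^sub>R fst (snd (P x))
    + (1 - b1s (Suc k)) *\<^sub>R (grad (fst (P x)) + zs x (Suc k))" for x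
  have [measurable]: "m \<in> borel_measurable N"
    unfolding m_def by measurable
  define s where "s x = (if Suc k = 1 then (1 / (1 - b1s 1)) *\<^sub>R m x
    else (1 / (1 - b1s (Suc k) ^ Suc k)) *\<^sub>R m x - (1 / (1 - b1s (Suc k) ^ k)) *\<^sub>R fst (snd (P x)))" for x
  have [measurable]: "s \<in> borel_measurable N"
    by (cases "Suc k = 1") (simp_all add: s_def[abs_def])
  define b where "b x = (\<chi> i. b2 * (snd (snd (P x)) $ i) + (1 - b2) * (s x $ i)\<^sup>2)" for x
  have [measurable]: "b \<in> borel_measurable N"
    unfolding b_def[abs_def] by (rule borel_measurable_vec_lambda) measurable
  define v where "v x = (\<chi> i. max (sqrt (b x $ i)) (\<delta> * sqrt (1 - b2 ^ Suc k)))" for x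
  have [measurable]: "v \<in> borel_measurable N"
    unfolding v_def[abs_def] by (rule borel_measurable_vec_lambda) measurable
  have [measurable]: "(\<lambda>x. (\<chi> i. m x $ i / v x $ i)) \<in> borel_measurable N"
    by (rule borel_measurable_vec_lambda) measurable
  have "agd_state grad b1s b2 \<delta> als w1 (zs x) (Suc k) =
     (fst (P x) - (als (Suc k) * sqrt (1 - b2 ^ Suc k) / (1 - b1s (Suc k) ^ Suc k))
        *\<^sub>R (\<chi> i. m x $ i / v x $ i), m x, b x)" for x
    by (cases "P x") (simp add: P_def[symmetric] m_def s_def b_def v_def Let_def)
  then show ?case by simp
qed

lemma agd_state_cong:
  assumes "\<And>s. s \<in> {1..k} \<Longrightarrow> z s = z' s"
  shows "agd_state grad b1s b2 \<delta> als w1 z k = agd_state grad b1s b2 \<delta> als w1 z' k"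
  using assms
proof (induction k)
  case (Suc k)
  then have "agd_state grad b1s b2 \<delta> als w1 z k = agd_state grad b1s b2 \<delta> als w1 z' k"
    and "z (Suc k) = z' (Suc k)"
    by auto
  then show ?case by (simp only: agd_state.simps(2) Let_def)
qed simp

locale agd_run =
  fixes grad :: "real ^ 'n \<Rightarrow> real ^ 'n" and z :: "nat \<Rightarrow> real ^ 'n"
    and w1 :: "real ^ 'n" and \<delta> \<alpha> \<beta>1 \<beta>2 :: real
begin

definition "beta1_t t = \<beta>1 / sqrt (real t)"
definition "alpha_t t = \<alpha> / sqrt (real t)"
definition "state k = agd_state grad (\<lambda>t. \<beta>1 / sqrt (real t)) \<beta>2 \<delta> (\<lambda>t. \<alpha> / sqrt (real t)) w1 z k"
definition "W t = fst (state (t - 1))"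
definition "Mom k = fst (snd (state k))"
definition "B k = snd (snd (state k))"
definition "stoch_grad t = grad (W t) + z t"
definition "S t = (if t = 1 then (1 / (1 - beta1_t 1)) *\<^sub>R Mom t
  else (1 / (1 - beta1_t t ^ t)) *\<^sub>R Mom t - (1 / (1 - beta1_t t ^ (t - 1))) *\<^sub>R Mom (t - 1))"
definition "V t = (\<chi> i. max (sqrt (B t $ i)) (\<delta> * sqrt (1 - \<beta>2 ^ t)))"
definition "alpha_hat t = alpha_t t * sqrt (1 - \<beta>2 ^ t) / (1 - beta1_t t ^ t)"

text \<open>\<open>V_prev t\<close> is \<open>v\<^sub>t\<^sub>-\<^sub>1\<close>, with \<open>v\<^sub>0\<close> replaced by the floor \<open>\<delta>\<surd>(1 - \<beta>\<^sub>2)\<close>. Unlike \<open>v\<^sub>t\<close>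
  it does not depend on \<open>\<zeta>\<^sub>t\<close>, so \<open>noise_term t\<close> has mean zero.\<close>

definition "V_prev t = (if t = 1 then (\<chi> i. \<delta> * sqrt (1 - \<beta>2)) else V (t - 1))"
definition "noise_term t =
  (\<Sum>i\<in>UNIV. alpha_hat t * (1 - beta1_t t) * grad (W t) $ i * z t $ i / V_prev t $ i)"

lemma agd_recursion:
  "Mom (Suc k) = beta1_t (Suc k) *\<^sub>R Mom k + (1 - beta1_t (Suc k)) *\<^sub>R stoch_grad (Suc k)"
  "B (Suc k) = (\<chi> i. \<beta>2 * (B k $ i) + (1 - \<beta>2) * (S (Suc k) $ i)\<^sup>2)"
  "W (Suc (Suc k)) = W (Suc k) - alpha_hat (Suc k) *\<^sub>R (\<chi> i. Mom (Suc k) $ i / V (Suc k) $ i)"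
  "Mom 0 = 0" "B 0 = 0" "W (Suc 0) = w1"
  by (simp_all add: Mom_def B_def W_def stoch_grad_def S_def V_def alpha_hat_def state_def beta1_t_def
      alpha_t_def split_beta Let_def)

lemma V_prev_Suc: "t \<ge> 1 \<Longrightarrow> V_prev (Suc t) = V t"
  by (simp add: V_prev_def)

end

locale bounded_agd_run = agd_run grad z w1 \<delta> \<alpha> \<beta>1 \<beta>2
  for grad :: "real ^ 'n \<Rightarrow> real ^ 'n" and z w1 \<delta> \<alpha> \<beta>1 \<beta>2 +
  fixes G :: real and T :: nat
  assumes \<delta>_pos: "\<delta> > 0" and \<alpha>_pos: "\<alpha> > 0"
    and \<beta>1: "0 \<le> \<beta>1" "\<beta>1 < 1" and \<beta>2: "0 \<le> \<beta>2" "\<beta>2 < 1"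
    and G_ge_\<delta>: "G \<ge> \<delta>"
    and linf_stoch_grad_le: "\<And>t. t \<in> {1..T} \<Longrightarrow> linf (stoch_grad t) \<le> G"
    and linf_grad_le: "\<And>t. t \<in> {1..T} \<Longrightarrow> linf (grad (W t)) \<le> G"
    and B_mono: "\<And>t i. t \<ge> 1 \<Longrightarrow> B t $ i \<le> B (t + 1) $ i"
begin

lemma G_pos: "G > 0"
  using \<delta>_pos G_ge_\<delta> by simp

lemma V_floor_pos: "\<delta> * sqrt (1 - \<beta>2) > 0"
  using \<delta>_pos \<beta>2 by simp

lemma beta1_t_bounds:
  assumes "t \<ge> 1"
  shows "0 \<le> beta1_t t" "beta1_t t \<le> \<beta>1" "beta1_t t < 1"
proof -
  have "sqrt (real t) \<ge> 1" using assms by simp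
  then show "0 \<le> beta1_t t" "beta1_t t \<le> \<beta>1"
    using \<beta>1 unfolding beta1_t_def
    by (auto simp: divide_le_eq intro!: mult_le_cancel_left1[THEN iffD2] divide_nonneg_nonneg)
  then show "beta1_t t < 1" using \<beta>1 by simp
qed

lemma beta1_t_power_bounds:
  assumes "t \<ge> 1" "k \<ge> 1"
  shows "0 \<le> beta1_t t ^ k" "beta1_t t ^ k \<le> \<beta>1"
proof -
  show "0 \<le> beta1_t t ^ k" using beta1_t_bounds[OF assms(1)] by simp
  have "beta1_t t ^ k \<le> beta1_t t ^ 1"
    using beta1_t_bounds[OF assms(1)] assms(2) by (intro power_decreasing) auto
  then show "beta1_t t ^ k \<le> \<beta>1" using beta1_t_bounds[OF assms(1)] by simp
qed

lemma abs_stoch_grad_le: "t \<in> {1..T} \<Longrightarrow> \<bar>stoch_grad t $ i\<bar> \<le> G"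
  using linf_stoch_grad_le abs_vec_nth_le_linf order_trans by blast

lemma abs_grad_le: "t \<in> {1..T} \<Longrightarrow> \<bar>grad (W t) $ i\<bar> \<le> G"
  using linf_grad_le abs_vec_nth_le_linf order_trans by blast

lemma abs_noise_le: "t \<in> {1..T} \<Longrightarrow> \<bar>z t $ i\<bar> \<le> 2 * G"
  using abs_stoch_grad_le[of t i] abs_grad_le[of t i] unfolding stoch_grad_def by (simp add: abs_le_iff)

lemma abs_Mom_le: "t \<le> T \<Longrightarrow> \<bar>Mom t $ i\<bar> \<le> G"
proof (induction t)
  case 0
  then show ?case using G_pos by (simp add: agd_recursion)
next
  case (Suc t)
  let ?b = "beta1_t (Suc t)"
  have b: "0 \<le> ?b" "?b < 1" using beta1_t_bounds[of "Suc t"] by auto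
  have "\<bar>Mom (Suc t) $ i\<bar> = \<bar>?b * Mom t $ i + (1 - ?b) * stoch_grad (Suc t) $ i\<bar>"
    by (simp add: agd_recursion)
  also have "\<dots> \<le> ?b * \<bar>Mom t $ i\<bar> + (1 - ?b) * \<bar>stoch_grad (Suc t) $ i\<bar>"
    using b by (simp add: abs_mult abs_triangle_ineq[THEN order_trans])
  also have "\<dots> \<le> ?b * G + (1 - ?b) * G"
    using b Suc abs_stoch_grad_le[of "Suc t" i] by (intro add_mono mult_left_mono) auto
  finally show ?case by (simp add: algebra_simps)
qed

lemma abs_div_le_of_denom_ge:
  assumes "\<bar>x\<bar> \<le> G" "1 - \<beta>1 \<le> c"
  shows "\<bar>x / c\<bar> \<le> G / (1 - \<beta>1)"
proof -
  have c: "c > 0" using assms \<beta>1 by simp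
  have "\<bar>x\<bar> / c \<le> G / c" using assms c by (simp add: divide_right_mono)
  also have "\<dots> \<le> G / (1 - \<beta>1)" using assms c G_pos \<beta>1 by (intro divide_left_mono) auto
  finally show ?thesis using c by simp
qed

lemma abs_S_le:
  assumes "t \<in> {1..T}"
  shows "\<bar>S t $ i\<bar> \<le> 2 * G / (1 - \<beta>1)"
proof (cases "t = 1")
  case True
  then have "\<bar>S t $ i\<bar> = \<bar>Mom 1 $ i / (1 - beta1_t 1)\<bar>"
    by (simp add: S_def)
  also have "\<dots> \<le> G / (1 - \<beta>1)"
    using abs_Mom_le[of 1 i] assms True beta1_t_bounds[of 1]
    by (intro abs_div_le_of_denom_ge) auto
  also have "\<dots> \<le> 2 * G / (1 - \<beta>1)" using G_pos \<beta>1 by (simp add: divide_right_mono)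
  finally show ?thesis .
next
  case False
  then have t: "t \<ge> 2" using assms by auto
  have "S t $ i = Mom t $ i / (1 - beta1_t t ^ t) - Mom (t - 1) $ i / (1 - beta1_t t ^ (t - 1))"
    using False by (simp add: S_def)
  then have "\<bar>S t $ i\<bar> \<le> \<bar>Mom t $ i / (1 - beta1_t t ^ t)\<bar> + \<bar>Mom (t - 1) $ i / (1 - beta1_t t ^ (t - 1))\<bar>"
    using abs_triangle_ineq4 by metis
  also have "\<dots> \<le> G / (1 - \<beta>1) + G / (1 - \<beta>1)"
    using assms t beta1_t_power_bounds[of t t] beta1_t_power_bounds[of t "t - 1"]
    by (intro add_mono abs_div_le_of_denom_ge abs_Mom_le) auto
  finally show ?thesis by simp
qed

lemma B_bounds: "t \<le> T \<Longrightarrow> 0 \<le> B t $ i \<and> B t $ i \<le> (2 * G / (1 - \<beta>1))\<^sup>2"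
proof (induction t)
  case 0
  then show ?case by (simp add: agd_recursion)
next
  case (Suc t)
  have "(S (Suc t) $ i)\<^sup>2 \<le> (2 * G / (1 - \<beta>1))\<^sup>2"
    using abs_S_le[of "Suc t" i] Suc.prems G_pos \<beta>1 by (intro power2_le_iff_abs_le[THEN iffD2]) auto
  then have "\<beta>2 * (B t $ i) + (1 - \<beta>2) * (S (Suc t) $ i)\<^sup>2
      \<le> \<beta>2 * (2 * G / (1 - \<beta>1))\<^sup>2 + (1 - \<beta>2) * (2 * G / (1 - \<beta>1))\<^sup>2"
    using Suc \<beta>2 by (intro add_mono mult_left_mono) auto
  moreover have "0 \<le> \<beta>2 * (B t $ i) + (1 - \<beta>2) * (S (Suc t) $ i)\<^sup>2"
    using Suc \<beta>2 by simp
  ultimately show ?case by (simp add: agd_recursion algebra_simps)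
qed

lemma V_ge_floor:
  assumes "t \<ge> 1"
  shows "V t $ i \<ge> \<delta> * sqrt (1 - \<beta>2)"
proof -
  have "\<beta>2 ^ t \<le> \<beta>2" using \<beta>2 power_decreasing[of 1 t \<beta>2] assms by simp
  then have "\<delta> * sqrt (1 - \<beta>2) \<le> \<delta> * sqrt (1 - \<beta>2 ^ t)" using \<delta>_pos by simp
  then show ?thesis by (simp add: V_def)
qed

lemma V_le:
  assumes "t \<in> {1..T}"
  shows "V t $ i \<le> 2 * G / (1 - \<beta>1)"
proof -
  have "sqrt (B t $ i) \<le> sqrt ((2 * G / (1 - \<beta>1))\<^sup>2)"
    using B_bounds[of t i] assms by (intro real_sqrt_le_mono) auto
  also have "\<dots> = 2 * G / (1 - \<beta>1)" using G_pos \<beta>1 by simp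
  finally have "sqrt (B t $ i) \<le> 2 * G / (1 - \<beta>1)" .
  moreover have "\<delta> * sqrt (1 - \<beta>2 ^ t) \<le> \<delta>"
    using \<beta>2 \<delta>_pos by (simp add: mult_left_le)
  moreover note G_ge_\<delta>
  moreover have "G \<le> 2 * G / (1 - \<beta>1)"
    using G_pos \<beta>1 by (simp add: le_divide_eq)
  ultimately show ?thesis by (simp add: V_def)
qed

lemma V_prev_ge_floor: "t \<ge> 1 \<Longrightarrow> V_prev t $ i \<ge> \<delta> * sqrt (1 - \<beta>2)"
  using V_ge_floor[of "t - 1" i] by (auto simp: V_prev_def)

lemma V_pos: "t \<ge> 1 \<Longrightarrow> V t $ i > 0"
  using V_ge_floor V_floor_pos by (meson less_le_trans)

lemma V_prev_pos: "t \<ge> 1 \<Longrightarrow> V_prev t $ i > 0"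
  using V_prev_ge_floor V_floor_pos by (meson less_le_trans)

lemma V_prev_le_V:
  assumes "t \<ge> 1"
  shows "V_prev t $ i \<le> V t $ i"
proof (cases "t = 1")
  case True
  then show ?thesis by (simp add: V_prev_def V_def)
next
  case False
  then obtain k where k: "t = Suc k" "k \<ge> 1" using assms by (cases t) auto
  have "sqrt (B k $ i) \<le> sqrt (B t $ i)"
    using B_mono[of k i] k by simp
  moreover have "\<beta>2 ^ t \<le> \<beta>2 ^ k"
    using \<beta>2 k by (intro power_decreasing) auto
  then have "\<delta> * sqrt (1 - \<beta>2 ^ k) \<le> \<delta> * sqrt (1 - \<beta>2 ^ t)"
    using \<delta>_pos by simp
  ultimately have "max (sqrt (B k $ i)) (\<delta> * sqrt (1 - \<beta>2 ^ k))
      \<le> max (sqrt (B t $ i)) (\<delta> * sqrt (1 - \<beta>2 ^ t))"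
    by (rule max.mono)
  then show ?thesis
    using k by (simp add: V_prev_def V_def)
qed

lemma alpha_hat_bounds:
  assumes "t \<ge> 1"
  shows "0 \<le> alpha_hat t" "alpha_hat t \<le> \<alpha> / (sqrt (real t) * (1 - \<beta>1))"
    "\<alpha> * sqrt (1 - \<beta>2) / sqrt (real t) \<le> alpha_hat t"
proof -
  have c: "1 - \<beta>1 \<le> 1 - beta1_t t ^ t" "1 - beta1_t t ^ t \<le> 1" "0 < 1 - beta1_t t ^ t"
    using beta1_t_power_bounds[of t t] assms \<beta>1 by auto
  have "\<beta>2 ^ t \<le> \<beta>2" using \<beta>2 power_decreasing[of 1 t \<beta>2] assms by simp
  then have q: "sqrt (1 - \<beta>2) \<le> sqrt (1 - \<beta>2 ^ t)" "sqrt (1 - \<beta>2 ^ t) \<le> 1"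
    "0 \<le> sqrt (1 - \<beta>2 ^ t)"
    using \<beta>2 by auto
  have al: "alpha_t t \<ge> 0" using \<alpha>_pos by (simp add: alpha_t_def)
  show "0 \<le> alpha_hat t" unfolding alpha_hat_def using al q c by simp
  have "alpha_hat t \<le> alpha_t t * 1 / (1 - \<beta>1)"
    unfolding alpha_hat_def using al q c \<beta>1 by (intro frac_le mult_left_mono) auto
  also have "\<dots> = \<alpha> / (sqrt (real t) * (1 - \<beta>1))"
    by (simp add: alpha_t_def)
  finally show "alpha_hat t \<le> \<alpha> / (sqrt (real t) * (1 - \<beta>1))" .
  have "\<alpha> * sqrt (1 - \<beta>2) / sqrt (real t) = alpha_t t * sqrt (1 - \<beta>2) / 1"
    by (simp add: alpha_t_def)
  also have "\<dots> \<le> alpha_hat t"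
    unfolding alpha_hat_def using al q c by (intro frac_le mult_left_mono) auto
  finally show "\<alpha> * sqrt (1 - \<beta>2) / sqrt (real t) \<le> alpha_hat t" .
qed

lemma alpha_hat_le:
  assumes "t \<ge> 1"
  shows "alpha_hat t \<le> \<alpha> / (1 - \<beta>1)"
proof -
  have "alpha_hat t \<le> \<alpha> / (sqrt (real t) * (1 - \<beta>1))"
    using alpha_hat_bounds(2)[OF assms] .
  also have "\<dots> \<le> \<alpha> / (1 * (1 - \<beta>1))"
    using assms \<alpha>_pos \<beta>1 by (intro divide_left_mono mult_right_mono) auto
  finally show ?thesis by simp
qed

definition "descent_rate = \<alpha> * sqrt (1 - \<beta>2) * (1 - \<beta>1)\<^sup>2 / (2 * G)"
definition "momentum_error = \<alpha> * \<beta>1 * G\<^sup>2 / ((1 - \<beta>1) * (\<delta> * sqrt (1 - \<beta>2)))"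
definition "drift_coeff = 2 * \<alpha> * G\<^sup>2 / (1 - \<beta>1)"
definition "step_sq_bound = \<alpha>\<^sup>2 * G\<^sup>2 / ((1 - \<beta>1)\<^sup>2 * \<delta>\<^sup>2 * (1 - \<beta>2))"

lemma gradient_part_lower_bound:
  assumes t: "t \<in> {1..T}"
  shows "descent_rate / sqrt (real t) * (grad (W t) $ i)\<^sup>2
    \<le> alpha_hat t * (1 - beta1_t t) * (grad (W t) $ i)\<^sup>2 / V t $ i"
proof -
  have t1: "t \<ge> 1" using t by simp
  define x where "x = (grad (W t) $ i)\<^sup>2"
  have x: "x \<ge> 0" unfolding x_def by simp
  have "\<alpha> * sqrt (1 - \<beta>2) / sqrt (real t) * (1 - \<beta>1) \<le> alpha_hat t * (1 - beta1_t t)"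
    by (rule mult_mono[OF alpha_hat_bounds(3)[OF t1]]) (use alpha_hat_bounds(1)[OF t1] beta1_t_bounds[OF t1] \<beta>1 in auto)
  moreover have "x / (2 * G / (1 - \<beta>1)) \<le> x / V t $ i"
    using V_le[OF t, of i] V_pos[OF t1, of i] x G_pos \<beta>1 by (intro divide_left_mono) auto
  ultimately have "\<alpha> * sqrt (1 - \<beta>2) / sqrt (real t) * (1 - \<beta>1) * (x / (2 * G / (1 - \<beta>1)))
      \<le> alpha_hat t * (1 - beta1_t t) * (x / V t $ i)"
    by (rule mult_mono)
      (use alpha_hat_bounds(1)[OF t1] beta1_t_bounds[OF t1] x G_pos \<beta>1 in auto)
  moreover have "descent_rate / sqrt (real t) * x
      = \<alpha> * sqrt (1 - \<beta>2) / sqrt (real t) * (1 - \<beta>1) * (x / (2 * G / (1 - \<beta>1)))"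
    using G_pos \<beta>1 by (simp add: descent_rate_def field_simps power2_eq_square)
  ultimately show ?thesis unfolding x_def by simp
qed

lemma abs_momentum_part_le:
  assumes t: "t \<in> {1..T}"
  shows "\<bar>alpha_hat t * beta1_t t * grad (W t) $ i * Mom (t - 1) $ i / V t $ i\<bar> \<le> momentum_error / real t"
proof -
  have t1: "t \<ge> 1" using t by simp
  have "\<bar>grad (W t) $ i * Mom (t - 1) $ i\<bar> \<le> G * G"
    unfolding abs_mult using abs_grad_le[OF t, of i] abs_Mom_le[of "t - 1" i] t G_pos
    by (intro mult_mono) auto
  then have ratio: "\<bar>grad (W t) $ i * Mom (t - 1) $ i\<bar> / V t $ i \<le> G * G / (\<delta> * sqrt (1 - \<beta>2))"
    using G_pos V_floor_pos V_ge_floor[OF t1] by (intro frac_le) auto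
  have coeff: "alpha_hat t * beta1_t t \<le> \<alpha> / (sqrt (real t) * (1 - \<beta>1)) * (\<beta>1 / sqrt (real t))"
    by (rule mult_mono[OF alpha_hat_bounds(2)[OF t1]]) (use beta1_t_bounds[OF t1] \<alpha>_pos \<beta>1 in \<open>auto simp: beta1_t_def\<close>)
  have "\<bar>alpha_hat t * beta1_t t * grad (W t) $ i * Mom (t - 1) $ i / V t $ i\<bar>
      = alpha_hat t * beta1_t t * (\<bar>grad (W t) $ i * Mom (t - 1) $ i\<bar> / V t $ i)"
    using alpha_hat_bounds(1)[OF t1] beta1_t_bounds[OF t1] V_pos[OF t1, of i] by (simp add: abs_mult)
  also have "\<dots> \<le> \<alpha> / (sqrt (real t) * (1 - \<beta>1)) * (\<beta>1 / sqrt (real t)) * (G * G / (\<delta> * sqrt (1 - \<beta>2)))"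
    by (rule mult_mono[OF coeff ratio]) (use \<alpha>_pos \<beta>1 V_pos[OF t1, of i] in auto)
  also have "\<dots> = momentum_error / real t"
    using t1 \<beta>1 by (simp add: momentum_error_def field_simps power2_eq_square)
  finally show ?thesis .
qed

lemma noise_coefficient_le:
  assumes t: "t \<in> {1..T}"
  shows "alpha_hat t * (1 - beta1_t t) * \<bar>grad (W t) $ i * z t $ i\<bar> \<le> drift_coeff"
proof -
  have t1: "t \<ge> 1" using t by simp
  have "alpha_hat t * (1 - beta1_t t) \<le> \<alpha> / (1 - \<beta>1) * 1"
    by (rule mult_mono[OF alpha_hat_le[OF t1]]) (use beta1_t_bounds[OF t1] \<alpha>_pos \<beta>1 in auto)
  moreover have "\<bar>grad (W t) $ i * z t $ i\<bar> \<le> G * (2 * G)"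
    unfolding abs_mult using abs_grad_le[OF t, of i] abs_noise_le[OF t, of i] G_pos
    by (intro mult_mono) auto
  ultimately have "alpha_hat t * (1 - beta1_t t) * \<bar>grad (W t) $ i * z t $ i\<bar> \<le> \<alpha> / (1 - \<beta>1) * 1 * (G * (2 * G))"
    by (rule mult_mono) (use \<alpha>_pos \<beta>1 in auto)
  also have "\<dots> = drift_coeff"
    by (simp add: drift_coeff_def power2_eq_square)
  finally show ?thesis .
qed

lemma abs_preconditioner_drift_le:
  assumes t: "t \<in> {1..T}"
  shows "\<bar>alpha_hat t * (1 - beta1_t t) * grad (W t) $ i * z t $ i * (1 / V t $ i - 1 / V_prev t $ i)\<bar>
    \<le> drift_coeff * (1 / V_prev t $ i - 1 / V t $ i)"
proof -
  have t1: "t \<ge> 1" using t by simp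
  have d: "1 / V t $ i \<le> 1 / V_prev t $ i"
    using V_prev_le_V[OF t1, of i] V_prev_pos[OF t1, of i] by (intro divide_left_mono) auto
  have "\<bar>alpha_hat t * (1 - beta1_t t) * grad (W t) $ i * z t $ i * (1 / V t $ i - 1 / V_prev t $ i)\<bar>
      = alpha_hat t * (1 - beta1_t t) * \<bar>grad (W t) $ i * z t $ i\<bar> * (1 / V_prev t $ i - 1 / V t $ i)"
    using alpha_hat_bounds(1)[OF t1] beta1_t_bounds[OF t1] d by (simp add: abs_mult)
  also have "\<dots> \<le> drift_coeff * (1 / V_prev t $ i - 1 / V t $ i)"
    using noise_coefficient_le[OF t, of i] d by (intro mult_right_mono) auto
  finally show ?thesis .
qed

lemma step_component_sq_le:
  assumes t: "t \<in> {1..T}"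
  shows "(alpha_hat t * (Mom t $ i / V t $ i))\<^sup>2 \<le> step_sq_bound / real t"
proof -
  have t1: "t \<ge> 1" using t by simp
  have ratio: "\<bar>Mom t $ i\<bar> / V t $ i \<le> G / (\<delta> * sqrt (1 - \<beta>2))"
    using abs_Mom_le[of t i] t G_pos V_floor_pos V_ge_floor[OF t1] by (intro frac_le) auto
  have "\<bar>alpha_hat t * (Mom t $ i / V t $ i)\<bar> = alpha_hat t * (\<bar>Mom t $ i\<bar> / V t $ i)"
    using alpha_hat_bounds(1)[OF t1] V_pos[OF t1, of i] by (simp add: abs_mult)
  also have "\<dots> \<le> \<alpha> / (sqrt (real t) * (1 - \<beta>1)) * (G / (\<delta> * sqrt (1 - \<beta>2)))"
    by (rule mult_mono[OF alpha_hat_bounds(2)[OF t1] ratio]) (use \<alpha>_pos \<beta>1 V_pos[OF t1, of i] in auto)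
  finally have "(alpha_hat t * (Mom t $ i / V t $ i))\<^sup>2
      \<le> (\<alpha> / (sqrt (real t) * (1 - \<beta>1)) * (G / (\<delta> * sqrt (1 - \<beta>2))))\<^sup>2"
    by (intro power2_le_iff_abs_le[THEN iffD2]) (use \<alpha>_pos \<beta>1 \<beta>2 G_pos \<delta>_pos in auto)
  also have "\<dots> = step_sq_bound / real t"
    using t1 \<beta>2 by (simp add: step_sq_bound_def power_mult_distrib power_divide)
  finally show ?thesis .
qed

lemma descent_direction_lower_bound:
  assumes t: "t \<in> {1..T}"
  shows "alpha_hat t * grad (W t) $ i * Mom t $ i / V t $ i \<ge>
     descent_rate / sqrt (real t) * (grad (W t) $ i)\<^sup>2
     + alpha_hat t * (1 - beta1_t t) * grad (W t) $ i * z t $ i / V_prev t $ i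
     - drift_coeff * (1 / V_prev t $ i - 1 / V t $ i) - momentum_error / real t"
proof -
  have t1: "t \<ge> 1" using t by simp
  then obtain k where k: "t = Suc k" by (cases t) auto
  have mom: "Mom t $ i = beta1_t t * Mom (t - 1) $ i + (1 - beta1_t t) * (grad (W t) $ i + z t $ i)"
    using k by (simp add: agd_recursion stoch_grad_def)
  have "alpha_hat t * grad (W t) $ i * Mom t $ i / V t $ i =
      alpha_hat t * beta1_t t * grad (W t) $ i * Mom (t - 1) $ i / V t $ i
      + alpha_hat t * (1 - beta1_t t) * (grad (W t) $ i)\<^sup>2 / V t $ i
      + alpha_hat t * (1 - beta1_t t) * grad (W t) $ i * z t $ i / V_prev t $ i
      + alpha_hat t * (1 - beta1_t t) * grad (W t) $ i * z t $ i * (1 / V t $ i - 1 / V_prev t $ i)"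
    unfolding mom using V_pos[OF t1, of i] V_prev_pos[OF t1, of i] by (simp add: field_simps power2_eq_square)
  then show ?thesis
    using gradient_part_lower_bound[OF t, of i] abs_momentum_part_le[OF t, of i]
      abs_preconditioner_drift_le[OF t, of i]
    unfolding abs_le_iff by linarith
qed

lemma inner_descent_direction_lower_bound:
  assumes t: "t \<in> {1..T}"
  shows "(\<Sum>i\<in>UNIV. alpha_hat t * grad (W t) $ i * Mom t $ i / V t $ i)
    \<ge> descent_rate / sqrt (real t) * (norm (grad (W t)))\<^sup>2 + noise_term t
      - drift_coeff * (\<Sum>i\<in>UNIV. 1 / V_prev t $ i - 1 / V t $ i) - real CARD('n) * (momentum_error / real t)"
proof -
  have "descent_rate / sqrt (real t) * (norm (grad (W t)))\<^sup>2 + noise_term t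
      - drift_coeff * (\<Sum>i\<in>UNIV. 1 / V_prev t $ i - 1 / V t $ i) - real CARD('n) * (momentum_error / real t)
    = (\<Sum>i\<in>UNIV. descent_rate / sqrt (real t) * (grad (W t) $ i)\<^sup>2
        + alpha_hat t * (1 - beta1_t t) * grad (W t) $ i * z t $ i / V_prev t $ i
        - drift_coeff * (1 / V_prev t $ i - 1 / V t $ i) - momentum_error / real t)"
    by (simp add: sum.distrib sum_subtractf sum_distrib_left[symmetric] sum_divide_distrib[symmetric]
        power2_norm_vec_eq_sum noise_term_def)
  also have "\<dots> \<le> (\<Sum>i\<in>UNIV. alpha_hat t * grad (W t) $ i * Mom t $ i / V t $ i)"
    by (rule sum_mono) (rule descent_direction_lower_bound[OF t])
  finally show ?thesis .
qed

lemma W_step: "t \<ge> 1 \<Longrightarrow> W (Suc t) = W t - alpha_hat t *\<^sub>R (\<chi> i. Mom t $ i / V t $ i)"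
  by (cases t) (simp_all add: agd_recursion)

lemma norm_step_sq_le:
  assumes t: "t \<in> {1..T}"
  shows "(norm (W (t + 1) - W t))\<^sup>2 \<le> real CARD('n) * (step_sq_bound / real t)"
proof -
  have "W (t + 1) - W t = (\<chi> i. - (alpha_hat t * (Mom t $ i / V t $ i)))"
    using t by (simp add: W_step vec_eq_iff)
  then have "(norm (W (t + 1) - W t))\<^sup>2 = (\<Sum>i\<in>UNIV. (alpha_hat t * (Mom t $ i / V t $ i))\<^sup>2)"
    unfolding power2_norm_vec_eq_sum by simp
  also have "\<dots> \<le> (\<Sum>i\<in>(UNIV::'n set). step_sq_bound / real t)"
    by (intro sum_mono step_component_sq_le[OF t])
  finally show ?thesis by simp
qed

lemma one_step_descent:
  fixes f :: "real ^ 'n \<Rightarrow> real"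
  assumes diff: "\<And>x. (f has_derivative (\<lambda>h. grad x \<bullet> h)) (at x)"
    and smooth: "\<And>x y. norm (grad x - grad y) \<le> L * norm (x - y)"
    and t: "t \<in> {1..T}"
  shows "descent_rate / sqrt (real t) * (norm (grad (W t)))\<^sup>2 \<le> f (W t) - f (W (t + 1)) - noise_term t
     + drift_coeff * (\<Sum>i\<in>UNIV. 1 / V_prev t $ i - 1 / V t $ i)
     + real CARD('n) * (momentum_error + L / 2 * step_sq_bound) / real t"
proof -
  have L: "L \<ge> 0"
    using lipschitz_constant_nonneg[OF smooth, of 0 "axis undefined 1"] by simp
  have "L / 2 * (norm (W (t + 1) - W t))\<^sup>2 \<le> L / 2 * (real CARD('n) * (step_sq_bound / real t))"
    using norm_step_sq_le[OF t] L by (intro mult_left_mono) auto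
  moreover have "grad (W t) \<bullet> (W (t + 1) - W t) = - (\<Sum>i\<in>UNIV. alpha_hat t * grad (W t) $ i * Mom t $ i / V t $ i)"
    using t by (simp add: W_step inner_vec_def sum_negf[symmetric] algebra_simps)
  moreover have "real CARD('n) * (momentum_error + L / 2 * step_sq_bound) / real t
      = real CARD('n) * (momentum_error / real t) + L / 2 * (real CARD('n) * (step_sq_bound / real t))"
    using t by (simp add: field_simps)
  ultimately show ?thesis
    using lipschitz_gradient_quadratic_bound[OF diff smooth, of "W (t + 1)" "W t"]
      inner_descent_direction_lower_bound[OF t] by linarith
qed

lemma sum_V_prev_telescope_le:
  assumes "T \<ge> 1"
  shows "(\<Sum>t=1..T. 1 / V_prev t $ i - 1 / V t $ i) \<le> 1 / (\<delta> * sqrt (1 - \<beta>2))"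
proof -
  have "(\<Sum>t=1..T. 1 / V_prev t $ i - 1 / V t $ i) = (\<Sum>t=1..T. 1 / V_prev t $ i - 1 / V_prev (Suc t) $ i)"
    by (intro sum.cong) (auto simp: V_prev_Suc)
  also have "\<dots> = 1 / V_prev 1 $ i - 1 / V_prev (Suc T) $ i"
    using sum_Suc_diff[of 1 T "\<lambda>t. - (1 / V_prev t $ i)"] assms by simp
  also have "\<dots> \<le> 1 / (\<delta> * sqrt (1 - \<beta>2))"
    using V_prev_pos[of "Suc T" i] by (simp add: V_prev_def)
  finally show ?thesis .
qed

lemma telescoped_descent:
  fixes f :: "real ^ 'n \<Rightarrow> real"
  assumes diff: "\<And>x. (f has_derivative (\<lambda>h. grad x \<bullet> h)) (at x)"
    and smooth: "\<And>x y. norm (grad x - grad y) \<le> L * norm (x - y)"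
    and opt: "\<And>w. f wstar \<le> f w" and T: "T \<ge> 1"
  shows "descent_rate * (\<Sum>t=1..T. (norm (grad (W t)))\<^sup>2 / sqrt (real t))
    \<le> f w1 - f wstar - (\<Sum>t=1..T. noise_term t)
     + drift_coeff * (real CARD('n) / (\<delta> * sqrt (1 - \<beta>2)))
     + real CARD('n) * (momentum_error + L / 2 * step_sq_bound) * (ln (real T) + 1)"
proof -
  let ?K = "real CARD('n) * (momentum_error + L / 2 * step_sq_bound)"
  have L: "L \<ge> 0"
    using lipschitz_constant_nonneg[OF smooth, of 0 "axis undefined 1"] by simp
  have K: "?K \<ge> 0"
    using L \<alpha>_pos \<beta>1 \<beta>2 \<delta>_pos G_pos by (simp add: momentum_error_def step_sq_bound_def)
  have "descent_rate * (\<Sum>t=1..T. (norm (grad (W t)))\<^sup>2 / sqrt (real t))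
      = (\<Sum>t=1..T. descent_rate / sqrt (real t) * (norm (grad (W t)))\<^sup>2)"
    by (simp add: sum_distrib_left)
  also have "\<dots> \<le> (\<Sum>t=1..T. f (W t) - f (W (t + 1)) - noise_term t
      + drift_coeff * (\<Sum>i\<in>UNIV. 1 / V_prev t $ i - 1 / V t $ i) + ?K / real t)"
    by (intro sum_mono one_step_descent[OF diff smooth]) auto
  also have "\<dots> = (\<Sum>t=1..T. f (W t) - f (W (Suc t))) - (\<Sum>t=1..T. noise_term t)
      + drift_coeff * (\<Sum>t=1..T. \<Sum>i\<in>UNIV. 1 / V_prev t $ i - 1 / V t $ i) + ?K * (\<Sum>t=1..T. 1 / real t)"
    by (simp add: sum.distrib sum_subtractf sum_distrib_left right_diff_distrib)
  finally have descent: "descent_rate * (\<Sum>t=1..T. (norm (grad (W t)))\<^sup>2 / sqrt (real t))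
      \<le> (\<Sum>t=1..T. f (W t) - f (W (Suc t))) - (\<Sum>t=1..T. noise_term t)
        + drift_coeff * (\<Sum>i\<in>UNIV. \<Sum>t=1..T. 1 / V_prev t $ i - 1 / V t $ i)
        + ?K * (\<Sum>t=1..T. 1 / real t)"
    by (simp only: sum.swap[of _ "{1..T}"])
  have "(\<Sum>t=1..T. f (W t) - f (W (Suc t))) = f w1 - f (W (Suc T))"
    using sum_Suc_diff[of 1 T "\<lambda>t. - f (W t)"] T by (simp add: agd_recursion)
  moreover have "drift_coeff * (\<Sum>i\<in>UNIV. \<Sum>t=1..T. 1 / V_prev t $ i - 1 / V t $ i)
      \<le> drift_coeff * (real CARD('n) / (\<delta> * sqrt (1 - \<beta>2)))"
    using sum_mono[OF sum_V_prev_telescope_le[OF T]] \<alpha>_pos \<beta>1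
    by (intro mult_left_mono) (auto simp: drift_coeff_def)
  moreover have "?K * (\<Sum>t=1..T. 1 / real t) \<le> ?K * (ln (real T) + 1)"
    using sum_inverse_le_ln_plus_one[OF T] K by (rule mult_left_mono)
  ultimately show ?thesis
    using descent opt[of "W (Suc T)"] by linarith
qed

lemma norm_grad_sq_le:
  assumes t: "t \<in> {1..T}"
  shows "(norm (grad (W t)))\<^sup>2 \<le> real CARD('n) * G\<^sup>2"
proof -
  have "(norm (grad (W t)))\<^sup>2 \<le> (\<Sum>i\<in>(UNIV::'n set). G\<^sup>2)"
    unfolding power2_norm_vec_eq_sum using abs_grad_le[OF t] G_pos
    by (intro sum_mono power2_le_iff_abs_le[THEN iffD2]) auto
  then show ?thesis by simp
qed

lemma abs_noise_term_le:
  assumes t: "t \<in> {1..T}"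
  shows "\<bar>noise_term t\<bar> \<le> real CARD('n) * (drift_coeff / (\<delta> * sqrt (1 - \<beta>2)))"
proof -
  have t1: "t \<ge> 1" using t by simp
  have "\<bar>noise_term t\<bar>
      \<le> (\<Sum>i\<in>UNIV. \<bar>alpha_hat t * (1 - beta1_t t) * grad (W t) $ i * z t $ i / V_prev t $ i\<bar>)"
    unfolding noise_term_def by (rule sum_abs)
  also have "\<dots> \<le> (\<Sum>i\<in>(UNIV::'n set). drift_coeff / (\<delta> * sqrt (1 - \<beta>2)))"
  proof (rule sum_mono)
    fix i
    have "\<bar>alpha_hat t * (1 - beta1_t t) * grad (W t) $ i * z t $ i / V_prev t $ i\<bar>
        = alpha_hat t * (1 - beta1_t t) * \<bar>grad (W t) $ i * z t $ i\<bar> / V_prev t $ i"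
      using alpha_hat_bounds(1)[OF t1] beta1_t_bounds[OF t1] V_prev_pos[OF t1, of i]
      by (simp add: abs_mult)
    also have "\<dots> \<le> drift_coeff / (\<delta> * sqrt (1 - \<beta>2))"
      using noise_coefficient_le[OF t, of i] V_prev_ge_floor[OF t1, of i] V_floor_pos \<alpha>_pos \<beta>1
      by (intro frac_le) (auto simp: drift_coeff_def)
    finally show "\<bar>alpha_hat t * (1 - beta1_t t) * grad (W t) $ i * z t $ i / V_prev t $ i\<bar>
        \<le> drift_coeff / (\<delta> * sqrt (1 - \<beta>2))" .
  qed
  finally show ?thesis by simp
qed

lemma norm_noise_le: "t \<in> {1..T} \<Longrightarrow> norm (z t) \<le> real CARD('n) * (2 * G)"
  using order_trans[OF norm_le_l1_cart sum_mono[OF abs_noise_le]] by simp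

end

lemma agd_run_W_eq:
  "agd_run.W grad z w1 \<delta> \<alpha> \<beta>1 \<beta>2 t
    = agd_w grad (\<lambda>t. \<beta>1 / sqrt (real t)) \<beta>2 \<delta> (\<lambda>t. \<alpha> / sqrt (real t)) w1 z t"
  by (simp add: agd_run.W_def agd_run.state_def agd_w_def)

lemma agd_run_stoch_grad_eq:
  "agd_run.stoch_grad grad z w1 \<delta> \<alpha> \<beta>1 \<beta>2 t
    = agd_g grad (\<lambda>t. \<beta>1 / sqrt (real t)) \<beta>2 \<delta> (\<lambda>t. \<alpha> / sqrt (real t)) w1 z t"
  by (simp add: agd_run.stoch_grad_def agd_g_def agd_run_W_eq)

lemma agd_run_B_eq:
  "agd_run.B grad z w1 \<delta> \<alpha> \<beta>1 \<beta>2 t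
    = agd_b grad (\<lambda>t. \<beta>1 / sqrt (real t)) \<beta>2 \<delta> (\<lambda>t. \<alpha> / sqrt (real t)) w1 z t"
  by (simp add: agd_run.B_def agd_run.state_def agd_b_def)

locale agd_stochastic =
  fixes grad :: "real ^ 'n \<Rightarrow> real ^ 'n" and M :: "'a measure" and \<zeta> :: "nat \<Rightarrow> 'a \<Rightarrow> real ^ 'n"
    and w1 :: "real ^ 'n" and L G \<delta> \<alpha> \<beta>1 \<beta>2 :: real and T :: nat
  assumes prob: "prob_space M"
    and smooth: "\<And>x y. norm (grad x - grad y) \<le> L * norm (x - y)"
    and noise_meas: "\<And>t. t \<in> {1..T} \<Longrightarrow> \<zeta> t \<in> borel_measurable M"
    and noise_indep: "prob_space.indep_vars M (\<lambda>_. borel) \<zeta> {1..T}"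
    and noise_mean: "\<And>t. t \<in> {1..T} \<Longrightarrow> integral\<^sup>L M (\<zeta> t) = 0"
    and bounded_paths: "\<And>\<omega>. \<omega> \<in> space M \<Longrightarrow> bounded_agd_run grad (\<lambda>s. \<zeta> s \<omega>) w1 \<delta> \<alpha> \<beta>1 \<beta>2 G T"
begin

sublocale prob_space M
  by (rule prob)

definition "W_at \<omega> = agd_run.W grad (\<lambda>s. \<zeta> s \<omega>) w1 \<delta> \<alpha> \<beta>1 \<beta>2"
definition "V_prev_at \<omega> = agd_run.V_prev grad (\<lambda>s. \<zeta> s \<omega>) w1 \<delta> \<alpha> \<beta>1 \<beta>2"
definition "noise_term_at \<omega> = agd_run.noise_term grad (\<lambda>s. \<zeta> s \<omega>) w1 \<delta> \<alpha> \<beta>1 \<beta>2"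

text \<open>\<open>budget (f w1 - f wstar)\<close> is the deterministic part of the bound of
  \<open>bounded_agd_run.telescoped_descent\<close>, with the constants unfolded.\<close>

definition "rate = \<alpha> * sqrt (1 - \<beta>2) * (1 - \<beta>1)\<^sup>2 / (2 * G)"
definition "budget \<Delta> = \<Delta> + 2 * \<alpha> * G\<^sup>2 / (1 - \<beta>1) * (real CARD('n) / (\<delta> * sqrt (1 - \<beta>2)))
  + real CARD('n) * (\<alpha> * \<beta>1 * G\<^sup>2 / ((1 - \<beta>1) * (\<delta> * sqrt (1 - \<beta>2)))
      + L / 2 * (\<alpha>\<^sup>2 * G\<^sup>2 / ((1 - \<beta>1)\<^sup>2 * \<delta>\<^sup>2 * (1 - \<beta>2)))) * (ln (real T) + 1)"

lemma parameter_bounds: "\<delta> > 0" "\<alpha> > 0" "0 \<le> \<beta>1" "\<beta>1 < 1" "0 \<le> \<beta>2" "\<beta>2 < 1" "G \<ge> \<delta>"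
proof -
  obtain \<omega> where "\<omega> \<in> space M" using not_empty by blast
  then interpret bounded_agd_run grad "\<lambda>s. \<zeta> s \<omega>" w1 \<delta> \<alpha> \<beta>1 \<beta>2 G T
    by (rule bounded_paths)
  show "\<delta> > 0" "\<alpha> > 0" "0 \<le> \<beta>1" "\<beta>1 < 1" "0 \<le> \<beta>2" "\<beta>2 < 1" "G \<ge> \<delta>"
    by (fact \<delta>_pos \<alpha>_pos \<beta>1 \<beta>2 G_ge_\<delta>)+
qed

lemma L_nonneg: "L \<ge> 0"
  using lipschitz_constant_nonneg[OF smooth, of 0 "axis undefined 1"] by simp

lemma path_descent:
  fixes f :: "real ^ 'n \<Rightarrow> real"
  assumes diff: "\<And>x. (f has_derivative (\<lambda>h. grad x \<bullet> h)) (at x)"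
    and opt: "\<And>w. f wstar \<le> f w" and T: "T \<ge> 1" and \<omega>: "\<omega> \<in> space M"
  shows "rate * (\<Sum>t=1..T. (norm (grad (W_at \<omega> t)))\<^sup>2 / sqrt (real t))
    \<le> budget (f w1 - f wstar) - (\<Sum>t=1..T. noise_term_at \<omega> t)"
proof -
  interpret bounded_agd_run grad "\<lambda>s. \<zeta> s \<omega>" w1 \<delta> \<alpha> \<beta>1 \<beta>2 G T
    by (rule bounded_paths[OF \<omega>])
  show ?thesis
    using telescoped_descent[OF diff smooth opt T]
    unfolding W_at_def noise_term_at_def rate_def budget_def descent_rate_def drift_coeff_def
      momentum_error_def step_sq_bound_def
    by simp
qed

lemma grad_measurable: "grad \<in> borel_measurable borel"
proof -
  have "L-lipschitz_on UNIV grad"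
    using L_nonneg smooth by (simp add: lipschitz_on_def dist_norm)
  then show ?thesis
    by (intro borel_measurable_continuous_onI lipschitz_on_continuous_on)
qed

lemma state_measurable:
  assumes "k \<le> T"
  shows "(\<lambda>\<omega>. fst (agd_run.state grad (\<lambda>s. \<zeta> s \<omega>) w1 \<delta> \<alpha> \<beta>1 \<beta>2 k)) \<in> borel_measurable M"
    "(\<lambda>\<omega>. snd (snd (agd_run.state grad (\<lambda>s. \<zeta> s \<omega>) w1 \<delta> \<alpha> \<beta>1 \<beta>2 k))) \<in> borel_measurable M"
  using agd_state_measurable[OF grad_measurable, of T "\<lambda>\<omega> s. \<zeta> s \<omega>" M k] noise_meas assms
  by (simp_all add: agd_run.state_def)

lemma W_at_measurable [measurable]: "t \<le> T \<Longrightarrow> (\<lambda>\<omega>. W_at \<omega> t) \<in> borel_measurable M"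
  unfolding W_at_def agd_run.W_def using state_measurable(1)[of "t - 1"] by simp

lemma grad_W_at_measurable [measurable]: "t \<le> T \<Longrightarrow> (\<lambda>\<omega>. grad (W_at \<omega> t)) \<in> borel_measurable M"
  using measurable_compose[OF W_at_measurable grad_measurable] .

lemma V_prev_at_measurable [measurable]:
  assumes "t \<le> T"
  shows "(\<lambda>\<omega>. V_prev_at \<omega> t $ i) \<in> borel_measurable M"
proof (cases "t = 1")
  case True
  then show ?thesis by (simp add: V_prev_at_def agd_run.V_prev_def)
next
  case False
  have [measurable]: "(\<lambda>\<omega>. agd_run.B grad (\<lambda>s. \<zeta> s \<omega>) w1 \<delta> \<alpha> \<beta>1 \<beta>2 (t - Suc 0)) \<in> borel_measurable M"
    unfolding agd_run.B_def using state_measurable(2)[of "t - 1"] assms by simp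
  show ?thesis
    using False by (simp add: V_prev_at_def agd_run.V_prev_def agd_run.V_def) measurable
qed

lemma noise_term_at_measurable [measurable]:
  assumes t: "t \<in> {1..T}"
  shows "(\<lambda>\<omega>. noise_term_at \<omega> t) \<in> borel_measurable M"
proof -
  have "t \<le> T" using t by simp
  note [measurable] = V_prev_at_measurable[OF this] grad_W_at_measurable[OF this]
    borel_measurable_vec_nth[OF noise_meas[OF t]]
  show ?thesis
    unfolding noise_term_at_def agd_run.noise_term_def W_at_def[symmetric] V_prev_at_def[symmetric]
    by measurable
qed

text \<open>\<open>\<nabla>f(w\<^sub>t)\<^sub>i / v\<^sub>t\<^sub>-\<^sub>1\<^sub>,\<^sub>i\<close> as a function of the noise sequence; only \<open>x 1, \<dots>, x (t - 1)\<close>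
  matter.\<close>

definition "grad_ratio t i x
  = grad (agd_run.W grad x w1 \<delta> \<alpha> \<beta>1 \<beta>2 t) $ i / agd_run.V_prev grad x w1 \<delta> \<alpha> \<beta>1 \<beta>2 t $ i"

lemma grad_ratio_state_eq:
  "grad_ratio t i x = grad (fst (agd_run.state grad x w1 \<delta> \<alpha> \<beta>1 \<beta>2 (t - 1))) $ i /
    (if t = 1 then \<delta> * sqrt (1 - \<beta>2)
     else max (sqrt (snd (snd (agd_run.state grad x w1 \<delta> \<alpha> \<beta>1 \<beta>2 (t - 1))) $ i))
       (\<delta> * sqrt (1 - \<beta>2 ^ (t - 1))))"
  by (simp add: grad_ratio_def agd_run.W_def agd_run.V_prev_def agd_run.V_def agd_run.B_def)

lemma grad_ratio_measurable:
  "grad_ratio t i \<in> borel_measurable (PiM {1..t - 1} (\<lambda>_. borel))"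
proof -
  have "(\<lambda>x. x s) \<in> borel_measurable (PiM {1..t - 1} (\<lambda>_. borel :: (real ^ 'n) measure))"
    if "s \<in> {1..t - 1}" for s
    using that by (rule measurable_component_singleton)
  from agd_state_measurable[OF grad_measurable, of "t - 1" "\<lambda>x s. x s", OF this, of "t - 1"]
  have [measurable]:
    "(\<lambda>x. fst (agd_run.state grad x w1 \<delta> \<alpha> \<beta>1 \<beta>2 (t - 1))) \<in> borel_measurable (PiM {1..t - 1} (\<lambda>_. borel))"
    "(\<lambda>x. snd (snd (agd_run.state grad x w1 \<delta> \<alpha> \<beta>1 \<beta>2 (t - 1)))) \<in> borel_measurable (PiM {1..t - 1} (\<lambda>_. borel))"
    by (simp_all add: agd_run.state_def)
  have [measurable]: "(\<lambda>x. grad (fst (agd_run.state grad x w1 \<delta> \<alpha> \<beta>1 \<beta>2 (t - 1))))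
      \<in> borel_measurable (PiM {1..t - 1} (\<lambda>_. borel))"
    using measurable_compose[OF _ grad_measurable] by measurable
  show ?thesis
    unfolding grad_ratio_state_eq[abs_def] by measurable
qed

lemma grad_ratio_restrict:
  "grad_ratio t i (restrict (\<lambda>s. \<zeta> s \<omega>) {1..t - 1}) = grad (W_at \<omega> t) $ i / V_prev_at \<omega> t $ i"
proof -
  have "agd_run.state grad (restrict (\<lambda>s. \<zeta> s \<omega>) {1..t - 1}) w1 \<delta> \<alpha> \<beta>1 \<beta>2 (t - 1)
      = agd_run.state grad (\<lambda>s. \<zeta> s \<omega>) w1 \<delta> \<alpha> \<beta>1 \<beta>2 (t - 1)"
    unfolding agd_run.state_def by (rule agd_state_cong) simp
  then show ?thesis
    unfolding grad_ratio_state_eq W_at_def V_prev_at_def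
    by (simp add: agd_run.W_def agd_run.V_prev_def agd_run.V_def agd_run.B_def)
qed

lemma indep_grad_ratio_noise:
  assumes t: "t \<in> {1..T}"
  shows "indep_var borel (\<lambda>\<omega>. grad (W_at \<omega> t) $ i / V_prev_at \<omega> t $ i) borel (\<lambda>\<omega>. \<zeta> t \<omega> $ i)"
proof -
  have "indep_var (PiM {1..t - 1} (\<lambda>_. borel)) (\<lambda>\<omega>. restrict (\<lambda>s. \<zeta> s \<omega>) {1..t - 1})
      (PiM {t} (\<lambda>_. borel)) (\<lambda>\<omega>. restrict (\<lambda>s. \<zeta> s \<omega>) {t})"
    using t by (intro indep_var_restrict[OF noise_indep]) auto
  moreover have "(\<lambda>x. x t $ i) \<in> borel_measurable (PiM {t} (\<lambda>_. borel :: (real ^ 'n) measure))"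
    using measurable_component_singleton[of t "{t}" "\<lambda>_. borel :: (real ^ 'n) measure"] by measurable
  ultimately have "indep_var borel (grad_ratio t i \<circ> (\<lambda>\<omega>. restrict (\<lambda>s. \<zeta> s \<omega>) {1..t - 1}))
      borel ((\<lambda>x. x t $ i) \<circ> (\<lambda>\<omega>. restrict (\<lambda>s. \<zeta> s \<omega>) {t}))"
    using indep_var_compose grad_ratio_measurable by blast
  moreover have "grad_ratio t i \<circ> (\<lambda>\<omega>. restrict (\<lambda>s. \<zeta> s \<omega>) {1..t - 1})
      = (\<lambda>\<omega>. grad (W_at \<omega> t) $ i / V_prev_at \<omega> t $ i)"
    by (simp only: comp_def grad_ratio_restrict)
  ultimately show ?thesis
    by (simp add: comp_def)
qed

lemma noise_integrable:
  assumes t: "t \<in> {1..T}"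
  shows "integrable M (\<zeta> t)"
proof (rule integrable_const_bound)
  show "AE \<omega> in M. norm (\<zeta> t \<omega>) \<le> real CARD('n) * (2 * G)"
    using bounded_agd_run.norm_noise_le[OF bounded_paths t] by (intro AE_I2) simp
qed (use noise_meas t in simp)

lemma grad_ratio_integrable:
  assumes t: "t \<in> {1..T}"
  shows "integrable M (\<lambda>\<omega>. grad (W_at \<omega> t) $ i / V_prev_at \<omega> t $ i)"
proof (rule integrable_const_bound)
  show "AE \<omega> in M. norm (grad (W_at \<omega> t) $ i / V_prev_at \<omega> t $ i) \<le> G / (\<delta> * sqrt (1 - \<beta>2))"
  proof (intro AE_I2)
    fix \<omega> assume \<omega>: "\<omega> \<in> space M"
    interpret bounded_agd_run grad "\<lambda>s. \<zeta> s \<omega>" w1 \<delta> \<alpha> \<beta>1 \<beta>2 G T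
      by (rule bounded_paths[OF \<omega>])
    have t1: "t \<ge> 1" using t by simp
    have "\<bar>grad (W t) $ i\<bar> / V_prev t $ i \<le> G / (\<delta> * sqrt (1 - \<beta>2))"
      using abs_grad_le[OF t] G_pos V_floor_pos V_prev_ge_floor[OF t1] by (intro frac_le) auto
    then show "norm (grad (W_at \<omega> t) $ i / V_prev_at \<omega> t $ i) \<le> G / (\<delta> * sqrt (1 - \<beta>2))"
      using V_prev_pos[OF t1, of i] by (simp add: W_at_def V_prev_at_def)
  qed
next
  have "t \<le> T" using t by simp
  note [measurable] = V_prev_at_measurable[OF this] grad_W_at_measurable[OF this]
  show "(\<lambda>\<omega>. grad (W_at \<omega> t) $ i / V_prev_at \<omega> t $ i) \<in> borel_measurable M"
    by measurable
qed

lemma expectation_noise_term_at: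
  assumes t: "t \<in> {1..T}"
  shows "integral\<^sup>L M (\<lambda>\<omega>. noise_term_at \<omega> t) = 0"
proof -
  define c where "c = agd_run.alpha_hat \<alpha> \<beta>1 \<beta>2 t * (1 - agd_run.beta1_t \<beta>1 t)"
  define Y where "Y i \<omega> = grad (W_at \<omega> t) $ i / V_prev_at \<omega> t $ i" for i \<omega>
  have noise_term_eq: "noise_term_at \<omega> t = (\<Sum>i\<in>UNIV. c * (Y i \<omega> * \<zeta> t \<omega> $ i))" for \<omega>
    unfolding noise_term_at_def agd_run.noise_term_def c_def Y_def W_at_def V_prev_at_def
    by (rule sum.cong) (simp_all add: field_simps)
  have noise_int: "integrable M (\<lambda>\<omega>. \<zeta> t \<omega> $ i)" for i
    using integrable_bounded_linear[OF bounded_linear_vec_nth noise_integrable[OF t]] by simp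
  have noise_mean_i: "integral\<^sup>L M (\<lambda>\<omega>. \<zeta> t \<omega> $ i) = 0" for i
    using integral_bounded_linear[OF bounded_linear_vec_nth noise_integrable[OF t], of i] noise_mean[OF t]
    by simp
  have Y_int: "integrable M (Y i)" for i
    unfolding Y_def[abs_def] by (rule grad_ratio_integrable[OF t])
  have indep: "indep_var borel (Y i) borel (\<lambda>\<omega>. \<zeta> t \<omega> $ i)" for i
    unfolding Y_def[abs_def] by (rule indep_grad_ratio_noise[OF t])
  have "integral\<^sup>L M (\<lambda>\<omega>. noise_term_at \<omega> t) = (\<Sum>i\<in>UNIV. c * integral\<^sup>L M (\<lambda>\<omega>. Y i \<omega> * \<zeta> t \<omega> $ i))"
    unfolding noise_term_eq using indep_var_integrable[OF indep Y_int noise_int] by simp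
  also have "\<dots> = 0"
    using indep_var_lebesgue_integral[OF indep Y_int noise_int] noise_mean_i by simp
  finally show ?thesis .
qed

lemma expected_descent:
  fixes f :: "real ^ 'n \<Rightarrow> real"
  assumes diff: "\<And>x. (f has_derivative (\<lambda>h. grad x \<bullet> h)) (at x)"
    and opt: "\<And>w. f wstar \<le> f w" and T: "T \<ge> 1"
  shows "rate * (\<Sum>t=1..T. integral\<^sup>L M (\<lambda>\<omega>. (norm (grad (W_at \<omega> t)))\<^sup>2) / sqrt (real t))
    \<le> budget (f w1 - f wstar)"
proof -
  have grad_int: "integrable M (\<lambda>\<omega>. (norm (grad (W_at \<omega> t)))\<^sup>2)" if t: "t \<in> {1..T}" for t
  proof (rule integrable_const_bound)
    show "AE \<omega> in M. norm ((norm (grad (W_at \<omega> t)))\<^sup>2) \<le> real CARD('n) * G\<^sup>2"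
      using bounded_agd_run.norm_grad_sq_le[OF bounded_paths t] by (intro AE_I2) (simp add: W_at_def)
  qed (use t in simp)
  have noise_int: "integrable M (\<lambda>\<omega>. noise_term_at \<omega> t)" if t: "t \<in> {1..T}" for t
  proof (rule integrable_const_bound)
    show "AE \<omega> in M. norm (noise_term_at \<omega> t)
        \<le> real CARD('n) * (2 * \<alpha> * G\<^sup>2 / (1 - \<beta>1) / (\<delta> * sqrt (1 - \<beta>2)))"
      using bounded_agd_run.abs_noise_term_le[OF bounded_paths t]
      by (intro AE_I2) (simp add: noise_term_at_def bounded_agd_run.drift_coeff_def[OF bounded_paths])
  qed (use t in simp)
  have "rate * (\<Sum>t=1..T. integral\<^sup>L M (\<lambda>\<omega>. (norm (grad (W_at \<omega> t)))\<^sup>2) / sqrt (real t))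
      = integral\<^sup>L M (\<lambda>\<omega>. rate * (\<Sum>t=1..T. (norm (grad (W_at \<omega> t)))\<^sup>2 / sqrt (real t)))"
    using grad_int by (simp add: Bochner_Integration.integral_sum integrable_divide)
  also have "\<dots> \<le> integral\<^sup>L M (\<lambda>\<omega>. budget (f w1 - f wstar) - (\<Sum>t=1..T. noise_term_at \<omega> t))"
    using grad_int noise_int path_descent[OF diff opt T]
    by (intro integral_mono integrable_mult_right integrable_sum integrable_divide
        Bochner_Integration.integrable_diff) auto
  also have "\<dots> = budget (f w1 - f wstar) - (\<Sum>t=1..T. integral\<^sup>L M (\<lambda>\<omega>. noise_term_at \<omega> t))"
    using noise_int prob_space
    by (subst Bochner_Integration.integral_diff) (auto intro!: integrable_sum simp: Bochner_Integration.integral_sum)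
  also have "\<dots> = budget (f w1 - f wstar)"
    by (simp add: expectation_noise_term_at)
  finally show ?thesis .
qed

lemma rate_pos: "rate > 0"
  using parameter_bounds by (simp add: rate_def)

lemma budget_pos:
  assumes "\<Delta> \<ge> 0" "T \<ge> 1"
  shows "budget \<Delta> > 0"
proof -
  have "0 < 2 * \<alpha> * G\<^sup>2 / (1 - \<beta>1) * (real CARD('n) / (\<delta> * sqrt (1 - \<beta>2)))"
    using parameter_bounds by simp
  moreover have "0 \<le> real CARD('n) * (\<alpha> * \<beta>1 * G\<^sup>2 / ((1 - \<beta>1) * (\<delta> * sqrt (1 - \<beta>2)))
      + L / 2 * (\<alpha>\<^sup>2 * G\<^sup>2 / ((1 - \<beta>1)\<^sup>2 * \<delta>\<^sup>2 * (1 - \<beta>2)))) * (ln (real T) + 1)"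
    using parameter_bounds L_nonneg assms(2) by simp
  ultimately show ?thesis
    using assms(1) unfolding budget_def by linarith
qed

lemma budget_div_rate_le:
  assumes "\<Delta> \<ge> 0" "T \<ge> 1"
  shows "budget \<Delta> / (2 * rate)
    \<le> G / (\<alpha> * (1 - \<beta>1)\<^sup>2 * (1 - \<beta>2)\<^sup>2)
        * (\<Delta> + real CARD('n) * G\<^sup>2 * \<alpha> / ((1 - \<beta>1) ^ 8 * \<delta>\<^sup>2) * (\<delta> + 8 * L * \<alpha>)
           + \<alpha> * \<beta>1 * real CARD('n) * G\<^sup>2 / ((1 - \<beta>1) ^ 3 * \<delta>))
      + 15 * L * real CARD('n) * G ^ 3 * \<alpha> / (2 * (1 - \<beta>2)\<^sup>2 * (1 - \<beta>1) ^ 10 * \<delta>\<^sup>2) * ln (real T)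
      + real CARD('n) * G ^ 3 / (\<alpha> * (1 - \<beta>1) ^ 5 * (1 - \<beta>2)\<^sup>2 * \<delta>) * \<alpha> / (1 - \<beta>1)
        * (ln (real T) + 1)"
proof -
  have "(sqrt (1 - \<beta>2))\<^sup>2 = 1 - \<beta>2" using parameter_bounds by simp
  with agd_constants_bound[OF assms(1), of "real CARD('n)" G \<delta> \<alpha> \<beta>1 L "ln (real T)" "1 - \<beta>1" "sqrt (1 - \<beta>2)"]
  show ?thesis
    using parameter_bounds L_nonneg assms(2) unfolding budget_def rate_def by simp
qed

end

theorem corollary1:
  fixes f :: "real ^ 'n \<Rightarrow> real" and grad :: "real ^ 'n \<Rightarrow> real ^ 'n"
    and M :: "'a measure" and \<zeta> :: "nat \<Rightarrow> 'a \<Rightarrow> real ^ 'n"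
    and wstar w1 :: "real ^ 'n"
    and L G \<delta> \<alpha> \<beta>1 \<beta>2 :: real and T :: nat
  assumes P: "prob_space M"
    and diff: "\<And>x. (f has_derivative (\<lambda>h. grad x \<bullet> h)) (at x)"
    and opt: "\<And>w. f wstar \<le> f w"
    and smooth: "\<And>x y. norm (grad x - grad y) \<le> L * norm (x - y)"
    and \<delta>: "\<delta> > 0" and \<alpha>: "\<alpha> > 0"
    and \<beta>1: "0 \<le> \<beta>1" "\<beta>1 < 1" and \<beta>2: "0 \<le> \<beta>2" "\<beta>2 < 1"
    and T: "T \<ge> 3"
    and Gd: "G \<ge> \<delta>"
    and meas: "\<And>t. t \<in> {1..T} \<Longrightarrow> \<zeta> t \<in> borel_measurable M"
    and indep: "prob_space.indep_vars M (\<lambda>_. borel) \<zeta> {1..T}"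
    and mean0: "\<And>t. t \<in> {1..T} \<Longrightarrow> integral\<^sup>L M (\<zeta> t) = 0"
    and gbound: "\<And>t \<omega>. t \<in> {1..T} \<Longrightarrow> \<omega> \<in> space M \<Longrightarrow>
       linf (agd_g grad (\<lambda>t. \<beta>1 / sqrt (real t)) \<beta>2 \<delta> (\<lambda>t. \<alpha> / sqrt (real t)) w1
               (\<lambda>s. \<zeta> s \<omega>) t) \<le> G"
    and gradbound: "\<And>t \<omega>. t \<in> {1..T} \<Longrightarrow> \<omega> \<in> space M \<Longrightarrow>
       linf (grad (agd_w grad (\<lambda>t. \<beta>1 / sqrt (real t)) \<beta>2 \<delta> (\<lambda>t. \<alpha> / sqrt (real t)) w1
               (\<lambda>s. \<zeta> s \<omega>) t)) \<le> G"
    and bmono: "\<And>t i \<omega>. t \<ge> 1 \<Longrightarrow> \<omega> \<in> space M \<Longrightarrow>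
       agd_b grad (\<lambda>t. \<beta>1 / sqrt (real t)) \<beta>2 \<delta> (\<lambda>t. \<alpha> / sqrt (real t)) w1 (\<lambda>s. \<zeta> s \<omega>) t $ i
       \<le> agd_b grad (\<lambda>t. \<beta>1 / sqrt (real t)) \<beta>2 \<delta> (\<lambda>t. \<alpha> / sqrt (real t)) w1 (\<lambda>s. \<zeta> s \<omega>) (t + 1) $ i"
  shows "Min ((\<lambda>t. integral\<^sup>L M (\<lambda>\<omega>. (norm (grad (agd_w grad (\<lambda>t. \<beta>1 / sqrt (real t)) \<beta>2 \<delta>
                 (\<lambda>t. \<alpha> / sqrt (real t)) w1 (\<lambda>s. \<zeta> s \<omega>) t)))\<^sup>2)) ` {1..T})
     < (G / (\<alpha> * (1 - \<beta>1)\<^sup>2 * (1 - \<beta>2)\<^sup>2)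
          * (f w1 - f wstar
             + real CARD('n) * G\<^sup>2 * \<alpha> / ((1 - \<beta>1) ^ 8 * \<delta>\<^sup>2) * (\<delta> + 8 * L * \<alpha>)
             + \<alpha> * \<beta>1 * real CARD('n) * G\<^sup>2 / ((1 - \<beta>1) ^ 3 * \<delta>)))
        * (1 / (sqrt (real T) - sqrt 2))
     + (15 * L * real CARD('n) * G ^ 3 * \<alpha> / (2 * (1 - \<beta>2)\<^sup>2 * (1 - \<beta>1) ^ 10 * \<delta>\<^sup>2))
        * (ln (real T) / (sqrt (real T) - sqrt 2))
     + (real CARD('n) * G ^ 3 / (\<alpha> * (1 - \<beta>1) ^ 5 * (1 - \<beta>2)\<^sup>2 * \<delta>)) * \<alpha> / (1 - \<beta>1)
        * ((ln (real T) + 1) / (sqrt (real T) - sqrt 2))"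
    (is "?min < ?C3 * (1 / ?D) + ?C4 * (?l / ?D) + ?C5 * (?l1 / ?D)")
proof -
  interpret agd_stochastic grad M \<zeta> w1 L G \<delta> \<alpha> \<beta>1 \<beta>2 T
    using P smooth meas indep mean0 \<delta> \<alpha> \<beta>1 \<beta>2 Gd gbound gradbound bmono
    unfolding agd_stochastic_def bounded_agd_run_def agd_run_W_eq agd_run_stoch_grad_eq agd_run_B_eq
    by auto
  have split_quotient: "(a + b * c + e * c') / D = a * (1 / D) + b * (c / D) + e * (c' / D)"
    for a b c e c' D :: real
    by (simp add: add_divide_distrib)
  have T1: "T \<ge> 1" and \<Delta>: "f w1 - f wstar \<ge> 0"
    using T opt[of w1] by auto
  have "?min < budget (f w1 - f wstar) / (2 * rate) / ?D"
    using Min_lt_of_sqrt_weighted_sum_le[OF expected_descent[OF diff opt T1] rate_pos budget_pos[OF \<Delta> T1] T]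
    by (simp add: W_at_def agd_run_W_eq)
  also have "\<dots> \<le> (?C3 + ?C4 * ?l + ?C5 * ?l1) / ?D"
    using budget_div_rate_le[OF \<Delta> T1] T by (intro divide_right_mono) auto
  also have "\<dots> = ?C3 * (1 / ?D) + ?C4 * (?l / ?D) + ?C5 * (?l1 / ?D)"
    by (rule split_quotient)
  finally show ?thesis .
qed

end
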